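(* Let $m,k,t,s$ be positive integers with $s<t<\lfloor\frac{m-1}{2}\rfloor$, and define $$c(x)=1+x^{t-s}+x^{s}+x^{t}+x^{t+s}+x^{m-(t-s)}+x^{m-s}+x^{m-t}+x^{m-(t+s)}\in\mathbb{F}_2[x]$$ (i.e. $c(x)=1+\sum_{j\in\{t-s,s,t,t+s\}}(x^j+x^{m-j})$, summing over the four listed values with multiplicity). Then $\gcd(c(x^k),x^m-1)=1$ if and only if $\gcd(m,3tk)=\gcd(m,tk)$ and $\gcd(m,3sk)=\gcd(m,sk)$.
   Context: All polynomials are over $\mathbb{F}_2$. *)

theory Defs
  imports "HOL-Computational_Algebra.Computational_Algebra" "HOL-Library.Z2"
begin

text \<open>Polynomials over F_2 are modelled as bit poly (bit is the two-element field of HOL-Library.Z2).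
  We equip bit with the standard (trivial) Euclidean/gcd structure of a field, exactly as
  Field_as_Ring does for real, rat and complex, so that the library gcd on bit poly is available.\<close>

lemma bit_mod_eq: "(a::bit) mod b = (if b = 0 then a else 0)"
  by (metis bit_not_one_iff div_mult_mod_eq mult_1_right mod_by_0 divide_bit_def add_0 mod_self)

instantiation bit ::
  "{unique_euclidean_ring, normalization_euclidean_semiring, normalization_semidom_multiplicative}"
begin

definition [simp]: "normalize_bit (x::bit) = (if x = 0 then 0 else 1::bit)"
definition [simp]: "unit_factor_bit (x::bit) = (x::bit)"
definition [simp]: "euclidean_size_bit (x::bit) = (if x = 0 then 0 else 1::nat)"
definition [simp]: "division_segment (x :: bit) = 1"

instance
  by standard (simp_all add: bit_mod_eq dvd_field_iff split: if_splits)

end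

instantiation bit :: euclidean_ring_gcd
begin

definition gcd_bit :: "bit \<Rightarrow> bit \<Rightarrow> bit" where
  "gcd_bit = Euclidean_Algorithm.gcd"
definition lcm_bit :: "bit \<Rightarrow> bit \<Rightarrow> bit" where
  "lcm_bit = Euclidean_Algorithm.lcm"
definition Gcd_bit :: "bit set \<Rightarrow> bit" where
 "Gcd_bit = Euclidean_Algorithm.Gcd"
definition Lcm_bit :: "bit set \<Rightarrow> bit" where
 "Lcm_bit = Euclidean_Algorithm.Lcm"

instance by standard (simp_all add: gcd_bit_def lcm_bit_def Gcd_bit_def Lcm_bit_def)

end

instance bit :: field_gcd ..

definition c_poly :: "nat \<Rightarrow> nat \<Rightarrow> nat \<Rightarrow> bit poly" where
  "c_poly m t s = 1 + (\<Sum>j\<leftarrow>[t - s, s, t, t + s]. monom 1 j + monom 1 (m - j))"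

end

theory Submission
  imports Defs
begin

text \<open>Multiplying by the unit \<open>x^(t+s)\<close> of \<open>\<bbbF>\<^sub>2[x]/(x^m - 1)\<close> turns \<open>c(x^k)\<close> into the
  product \<open>\<Phi>(x^(tk)) \<Phi>(x^(sk))\<close>, where \<open>\<Phi>(w) = w^2 + w + 1\<close>, so it suffices to decide when
  \<open>\<Phi>(x^n)\<close> is coprime to \<open>x^m - 1\<close>. With \<open>g = gcd m n\<close>: if \<open>gcd m (3n) = g\<close>, a common factor
  divides \<open>x^(gcd m (3n)) - 1 = x^g - 1\<close>, hence \<open>x^n - 1\<close>, and modulo it \<open>\<Phi>(x^n) \<equiv> 3\<close>, a unit.
  Otherwise \<open>3g\<close> divides \<open>m\<close> but not \<open>n\<close>, and \<open>\<Phi>(x^g)\<close> is a common factor.\<close>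

lemma power_minus_one_dvd_power_mult_minus_one:
  fixes x :: "'a::comm_ring_1"
  shows "x ^ a - 1 dvd x ^ (a * q) - 1"
  using power_diff_1_eq[of "x ^ a" q] by (simp add: power_mult)

lemma dvd_power_gcd_minus_one:
  fixes x d :: "'a::comm_ring_1"
  assumes "d dvd x ^ a - 1" and "d dvd x ^ b - 1"
  shows "d dvd x ^ gcd a b - 1"
  using assms
proof (induction a b rule: gcd_nat_induct)
  case (base a)
  then show ?case by simp
next
  case (step a b)
  have "x ^ a - 1 = x ^ (a mod b) * (x ^ (b * (a div b)) - 1) + (x ^ (a mod b) - 1)"
    by (simp add: algebra_simps flip: power_add)
  moreover have "d dvd x ^ (b * (a div b)) - 1"
    using step.prems(2) power_minus_one_dvd_power_mult_minus_one dvd_trans by blast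
  ultimately have "d dvd x ^ (a mod b) - 1"
    using step.prems(1) by (metis dvd_add_right_iff dvd_mult)
  then show ?case
    using step by (metis gcd_red_nat)
qed

lemma coprime_add_mult_left_iff:
  fixes a b c :: "'a::{comm_ring_1, algebraic_semidom}"
  shows "coprime (a + c * b) b \<longleftrightarrow> coprime a b"
proof -
  have "d dvd a + c * b \<longleftrightarrow> d dvd a" if "d dvd b" for d
    using that by (simp add: dvd_add_left_iff)
  then show ?thesis
    by (auto simp: coprime_def)
qed

lemma gcd_three_mult_neq:
  fixes m n :: nat
  assumes "gcd m (3 * n) \<noteq> gcd m n"
  obtains m' q where "m = gcd m n * (3 * m')" and "n = gcd m n * q" and "\<not> 3 dvd q"
proof -
  define g where "g = gcd m n"
  have "g \<noteq> 0"
    using assms by (auto simp: g_def)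
  then obtain m'' q where m: "m = g * m''" and n: "n = g * q" and cop: "coprime m'' q"
    using gcd_coprime_exists[of m n] unfolding g_def by (metis mult.commute)
  have "gcd m (3 * n) = g * gcd m'' (3 * q)"
    unfolding m n by (metis gcd_mult_distrib_nat mult.left_commute)
  also have "gcd m'' (3 * q) = gcd m'' 3"
    using cop by (rule gcd_mult_right_right_cancel)
  finally have "gcd m'' 3 \<noteq> 1"
    using assms by (auto simp: g_def)
  have "3 dvd m''"
  proof (rule ccontr)
    assume "\<not> 3 dvd m''"
    then have "coprime 3 m''"
      by (intro prime_imp_coprime) simp_all
    with \<open>gcd m'' 3 \<noteq> 1\<close> show False
      by (simp add: coprime_iff_gcd_eq_1 gcd.commute)
  qed
  then obtain m' where "m'' = 3 * m'" ..
  with m have "m = g * (3 * m')"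
    by simp
  moreover have "\<not> 3 dvd q"
    using \<open>3 dvd m''\<close> cop coprime_common_divisor_nat by fastforce
  ultimately show thesis
    using that n unfolding g_def by blast
qed

definition cyclo3 :: "'a::comm_ring_1 \<Rightarrow> 'a" where
  "cyclo3 w = w ^ 2 + w + 1"

lemma cyclo3_dvd_power_three_minus_one: "cyclo3 w dvd w ^ 3 - 1"
proof
  show "w ^ 3 - 1 = cyclo3 w * (w - 1)"
    by (simp add: cyclo3_def algebra_simps power2_eq_square power3_eq_cube)
qed

lemma cyclo3_dvd_cyclo3_power:
  assumes "\<not> 3 dvd q"
  shows "cyclo3 w dvd cyclo3 (w ^ q)"
proof -
  have "cyclo3 w dvd cyclo3 (w ^ (3 * l + r))" if "r \<in> {1, 2}" for l r
  proof (induction l)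
    case 0
    have "cyclo3 (w ^ 2) = cyclo3 w * (w ^ 2 - w + 1)"
      by (simp add: cyclo3_def algebra_simps power2_eq_square)
    then show ?case
      using that by auto
  next
    case (Suc l)
    let ?p = "w ^ (3 * l + r)"
    have "cyclo3 (w ^ (3 * Suc l + r)) = cyclo3 ?p + (w ^ 3 - 1) * (?p ^ 2 * (w ^ 3 + 1) + ?p)"
      by (simp add: cyclo3_def algebra_simps power_add flip: power_mult)
    moreover have "cyclo3 w dvd (w ^ 3 - 1) * (?p ^ 2 * (w ^ 3 + 1) + ?p)"
      by (rule dvd_mult2[OF cyclo3_dvd_power_three_minus_one])
    ultimately show ?case
      using Suc.IH by (simp add: dvd_add)
  qed
  moreover have "q = 3 * (q div 3) + q mod 3" and "q mod 3 \<in> {1, 2}"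
    using assms by (simp, fastforce simp: dvd_eq_mod_eq_0)
  ultimately show ?thesis
    by metis
qed

lemma X_power_eq_monom: "[:0, 1:] ^ n = monom 1 n"
  by (simp add: monom_altdef)

lemma cyclo3_X_power_not_unit:
  assumes "n > 0"
  shows "\<not> is_unit (cyclo3 ([:0, 1:] ^ n :: 'a::field poly))"
proof
  assume unit: "is_unit (cyclo3 ([:0, 1:] ^ n :: 'a poly))"
  have "coeff (cyclo3 ([:0, 1:] ^ n :: 'a poly)) (2 * n) = 1"
    using assms by (simp add: cyclo3_def X_power_eq_monom monom_power coeff_monom mult.commute)
  then have "cyclo3 ([:0, 1:] ^ n :: 'a poly) \<noteq> 0" and "2 * n \<le> degree (cyclo3 ([:0, 1:] ^ n :: 'a poly))"
    by (auto intro: le_degree)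
  with unit assms show False
    by (simp add: is_unit_iff_degree)
qed

lemma coprime_X_X_power_minus_one:
  assumes "m > 0"
  shows "coprime [:0, 1:] ([:0, 1:] ^ m - 1 :: 'a::field poly)"
proof -
  obtain m' where m: "m = Suc m'"
    using assms by (cases m) auto
  have "coprime (-1 + [:0, 1:] ^ m' * [:0, 1:]) ([:0, 1:] :: 'a poly)"
    by (simp only: coprime_add_mult_left_iff) (simp add: is_unit_left_imp_coprime)
  moreover have "-1 + [:0, 1:] ^ m' * [:0, 1:] = [:0, 1:] ^ m - (1 :: 'a poly)"
    by (simp add: m algebra_simps)
  ultimately show ?thesis
    by (simp add: coprime_commute)
qed

lemma coprime_cyclo3_X_power_iff:
  fixes m n :: nat
  assumes "(3::'a::field) \<noteq> 0"
  shows "coprime (cyclo3 ([:0, 1:] ^ n :: 'a poly)) ([:0, 1:] ^ m - 1) \<longleftrightarrow> gcd m (3 * n) = gcd m n"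
proof -
  define X :: "'a poly" where "X = [:0, 1:]"
  define g where "g = gcd m n"
  define z where "z = X ^ n"
  have "coprime (cyclo3 z) (X ^ m - 1) \<longleftrightarrow> gcd m (3 * n) = g"
  proof
    assume cop: "coprime (cyclo3 z) (X ^ m - 1)"
    show "gcd m (3 * n) = g"
    proof (rule ccontr)
      assume ne: "gcd m (3 * n) \<noteq> g"
      obtain m' q where m: "m = g * (3 * m')" and n: "n = g * q" and "\<not> 3 dvd q"
        using gcd_three_mult_neq ne unfolding g_def by blast
      define w where "w = X ^ g"
      have "cyclo3 w dvd X ^ m - 1"
      proof -
        have "w ^ 3 - 1 dvd X ^ m - 1"
          using power_minus_one_dvd_power_mult_minus_one[of w 3 m'] m by (simp add: w_def power_mult)
        then show ?thesis
          using cyclo3_dvd_power_three_minus_one dvd_trans by blast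
      qed
      moreover have "cyclo3 w dvd cyclo3 z"
        using cyclo3_dvd_cyclo3_power[OF \<open>\<not> 3 dvd q\<close>, of w] n by (simp add: w_def z_def power_mult)
      moreover have "g > 0"
        using ne unfolding g_def by (metis gcd_eq_0_iff mult_0_right neq0_conv)
      then have "\<not> is_unit (cyclo3 w)"
        using cyclo3_X_power_not_unit by (simp add: w_def X_def)
      ultimately show False
        using cop coprime_common_divisor by blast
    qed
  next
    assume eq: "gcd m (3 * n) = g"
    show "coprime (cyclo3 z) (X ^ m - 1)"
    proof (rule coprimeI)
      fix d
      assume dz: "d dvd cyclo3 z" and dm: "d dvd X ^ m - 1"
      have "d dvd X ^ (3 * n) - 1"
        using dz cyclo3_dvd_power_three_minus_one[of z] dvd_trans
        by (metis z_def mult.commute power_mult)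
      then have "d dvd X ^ g - 1"
        using dvd_power_gcd_minus_one[OF _ dm] eq by (metis gcd.commute)
      then have "d dvd z - 1"
        using power_minus_one_dvd_power_mult_minus_one[of X g "n div g"] dvd_trans
        by (simp add: z_def g_def)
      moreover have "cyclo3 z = (z - 1) * (z + 2) + 3"
        by (simp add: cyclo3_def algebra_simps power2_eq_square)
      ultimately have "d dvd 3"
        using dz by (metis dvd_add_right_iff dvd_mult2)
      moreover have "is_unit (3 :: 'a poly)"
        using assms by (simp add: numeral_poly is_unit_const_poly_iff dvd_field_iff)
      ultimately show "is_unit d"
        using dvd_unit_imp_unit by blast
    qed
  qed
  then show ?thesis
    by (simp add: X_def z_def g_def)
qed

lemma pcompose_monom_one: "pcompose (monom 1 j) q = q ^ j"
  by (induction j) (simp_all add: monom_altdef pcompose_1 pcompose_mult pcompose_pCons)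

lemma pcompose_c_poly:
  "pcompose (c_poly m t s) q = 1 + (\<Sum>j\<leftarrow>[t - s, s, t, t + s]. q ^ j + q ^ (m - j))"
  by (simp add: c_poly_def pcompose_add pcompose_1 pcompose_monom_one)

lemma c_factorization:
  fixes y :: "'a::comm_ring_1"
  assumes "s \<le> t" and "t + s \<le> m"
  shows "y ^ (t + s) * (1 + (\<Sum>j\<leftarrow>[t - s, s, t, t + s]. y ^ j + y ^ (m - j)))
    = cyclo3 (y ^ t) * cyclo3 (y ^ s) + (y ^ m - 1) * (y ^ (2 * s) + y ^ t + y ^ s + 1)"
proof -
  obtain d e where t: "t = s + d" and m: "m = 2 * s + d + e"
    using assms by (metis add.commute le_add_diff_inverse mult_2 add.assoc)
  have "m - (t - s) = 2 * s + e" "m - s = s + d + e" "m - t = s + e" "m - (t + s) = e"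
    by (simp_all add: t m)
  then show ?thesis
    by (simp add: t m cyclo3_def power_add power_mult algebra_simps power2_eq_square)
qed

theorem proposition2:
  fixes m k t s :: nat
  assumes "m > 0" "k > 0" "t > 0" "s > 0"
    and "s < t" "t < (m - 1) div 2"
  shows "gcd (pcompose (c_poly m t s) (monom 1 k)) (monom 1 m - 1) = 1
     \<longleftrightarrow> gcd m (3 * t * k) = gcd m (t * k) \<and> gcd m (3 * s * k) = gcd m (s * k)"
proof -
  define X :: "bit poly" where "X = [:0, 1:]"
  define y where "y = X ^ k"
  define f where "f = X ^ m - 1"
  define C where "C = pcompose (c_poly m t s) (monom 1 k)"
  have "f dvd y ^ m - 1"
    using power_minus_one_dvd_power_mult_minus_one[of X m k] by (simp add: f_def y_def mult.commute power_mult)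
  then obtain h where h: "y ^ m - 1 = h * f"
    by (metis dvd_def mult.commute)
  have "y ^ (t + s) * C = cyclo3 (y ^ t) * cyclo3 (y ^ s) + (y ^ m - 1) * (y ^ (2 * s) + y ^ t + y ^ s + 1)"
    using c_factorization[of s t m y] assms by (simp add: C_def y_def X_def X_power_eq_monom pcompose_c_poly)
  then have factorization: "y ^ (t + s) * C = cyclo3 (y ^ t) * cyclo3 (y ^ s) + (h * (y ^ (2 * s) + y ^ t + y ^ s + 1)) * f"
    unfolding h by (simp add: ac_simps)
  have "coprime y f"
    using coprime_X_X_power_minus_one[OF \<open>m > 0\<close>, where 'a = bit] by (simp add: y_def f_def X_def)
  have "gcd C f = 1 \<longleftrightarrow> coprime C f"
    by (simp add: coprime_iff_gcd_eq_1)
  also have "\<dots> \<longleftrightarrow> coprime (y ^ (t + s) * C) f"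
    using \<open>coprime y f\<close> by simp
  also have "\<dots> \<longleftrightarrow> coprime (cyclo3 (y ^ t)) f \<and> coprime (cyclo3 (y ^ s)) f"
    unfolding factorization by (simp add: coprime_add_mult_left_iff)
  also have "\<dots> \<longleftrightarrow> gcd m (3 * (k * t)) = gcd m (k * t) \<and> gcd m (3 * (k * s)) = gcd m (k * s)"
    using coprime_cyclo3_X_power_iff[where 'a = bit] by (simp add: y_def f_def X_def flip: power_mult)
  finally show ?thesis
    by (simp add: C_def f_def X_def X_power_eq_monom mult_ac)
qed

end
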